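(* In ${\rm Br}({\rm G}_2)$ the following equalities hold: $$r_0r_1e_0=e_1e_0,\qquad e_0r_1r_0=e_0e_1,\qquad e_0e_1e_0=\delta^2e_0,\qquad r_1r_0e_1r_0r_1e_0=\delta e_0.$$
   Context: Let $\delta$ be an indeterminate. ${\rm Br}({\rm G}_2)$ is the $\mathbb{Z}[\delta^{\pm1}]$-algebra generated by $r_0,r_1,e_0,e_1$ subject to the following relations: - $r_0^2=r_1^2=1$; - $r_ie_i=e_ir_i=e_i$ for $i=0,1$; - $e_0^2=\delta^3e_0$ and $e_1^2=\delta e_1$; - $r_0e_1e_0=r_1e_0$ and $e_0e_1r_0=e_0r_1$; - $e_1r_0e_1r_0e_1=e_1$ and $e_1r_0e_1r_0r_1=e_1r_0r_1r_0$; - $e_0r_1e_0=\delta^2e_0$; - $r_1r_0e_1r_0e_1=r_0r_1r_0e_1$; - $(r_1r_0)^6=1$. *)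

theory Defs
  imports Main
begin

text \<open>A family (d, r0, r1, e0, e1) in a unital (not necessarily commutative) ring
  satisfies the defining relations of Br(G2) over Z[delta, delta^-1] when d is a central
  unit (the image of the indeterminate delta) and the generator relations hold.
  Br(G2) is the universal such ring, so an identity holds in Br(G2) iff it holds for
  every such family in every ring.\<close>
definition brG2_rels :: "'a::ring_1 \<Rightarrow> 'a \<Rightarrow> 'a \<Rightarrow> 'a \<Rightarrow> 'a \<Rightarrow> bool" where
  "brG2_rels d r0 r1 e0 e1 \<longleftrightarrow>
     (\<forall>x. d * x = x * d) \<and> (\<exists>d'. d' * d = 1 \<and> d * d' = 1) \<and>
     r0 * r0 = 1 \<and> r1 * r1 = 1 \<and>
     r0 * e0 = e0 \<and> e0 * r0 = e0 \<and> r1 * e1 = e1 \<and> e1 * r1 = e1 \<and>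
     e0 * e0 = d ^ 3 * e0 \<and> e1 * e1 = d * e1 \<and>
     r0 * e1 * e0 = r1 * e0 \<and> e0 * e1 * r0 = e0 * r1 \<and>
     e1 * r0 * e1 * r0 * e1 = e1 \<and> e1 * r0 * e1 * r0 * r1 = e1 * r0 * r1 * r0 \<and>
     e0 * r1 * e0 = d ^ 2 * e0 \<and>
     r1 * r0 * e1 * r0 * e1 = r0 * r1 * r0 * e1 \<and>
     (r1 * r0) ^ 6 = 1"

end

theory Submission
  imports Defs
begin

lemma involution_mult_left_swap:
  fixes a x y :: "'a::monoid_mult"
  assumes "a * a = 1" and "a * x = y"
  shows "a * y = x"
  using assms by (metis mult.assoc mult_1)

lemma involution_mult_right_swap:
  fixes a x y :: "'a::monoid_mult"
  assumes "a * a = 1" and "x * a = y"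
  shows "y * a = x"
  using assms by (metis mult.assoc mult_1_right)

lemma brG2_r0_r1_e0:
  assumes "brG2_rels d r0 r1 e0 e1"
  shows "r0 * r1 * e0 = e1 * e0"
proof -
  have "r0 * r0 = 1" and "r0 * (e1 * e0) = r1 * e0"
    using assms by (auto simp: brG2_rels_def mult.assoc)
  then show ?thesis by (metis involution_mult_left_swap mult.assoc)
qed

lemma brG2_e0_r1_r0:
  assumes "brG2_rels d r0 r1 e0 e1"
  shows "e0 * r1 * r0 = e0 * e1"
proof -
  have "r0 * r0 = 1" and "e0 * e1 * r0 = e0 * r1"
    using assms by (auto simp: brG2_rels_def)
  then show ?thesis by (rule involution_mult_right_swap)
qed

lemma brG2_e0_e1_e0:
  assumes "brG2_rels d r0 r1 e0 e1"
  shows "e0 * e1 * e0 = d ^ 2 * e0"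
proof -
  have "e0 * e1 * e0 = (e0 * r0) * r1 * e0"
    using brG2_r0_r1_e0 [OF assms] by (simp add: mult.assoc)
  also have "\<dots> = d ^ 2 * e0"
    using assms by (simp add: brG2_rels_def)
  finally show ?thesis .
qed

lemma brG2_r1_r0_e1_r0_r1_e0:
  assumes "brG2_rels d r0 r1 e0 e1"
  shows "r1 * r0 * e1 * r0 * r1 * e0 = d * e0"
proof -
  note rels = assms [unfolded brG2_rels_def]
  have r1_e0: "r1 * e0 = r0 * e1 * e0" and r0_r0: "r0 * r0 = 1" and r1_r1: "r1 * r1 = 1"
    and e1_e1: "e1 * e1 = d * e1" and d_central: "\<And>x. d * x = x * d"
    using rels by auto
  have "r1 * r0 * e1 * r0 * r1 * e0 = r1 * r0 * e1 * (r0 * r0) * e1 * e0"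
    by (simp add: r1_e0 mult.assoc)
  also have "\<dots> = r1 * r0 * (e1 * e1) * e0"
    by (simp add: r0_r0 mult.assoc)
  also have "\<dots> = d * (r1 * (r0 * e1 * e0))"
    by (simp add: e1_e1 d_central mult.assoc)
  also have "\<dots> = d * ((r1 * r1) * e0)"
    by (simp add: r1_e0 mult.assoc)
  also have "\<dots> = d * e0"
    by (simp add: r1_r1)
  finally show ?thesis .
qed

theorem lemma9p2:
  fixes d r0 r1 e0 e1 :: "'a::ring_1"
  assumes "brG2_rels d r0 r1 e0 e1"
  shows "r0 * r1 * e0 = e1 * e0 \<and> e0 * r1 * r0 = e0 * e1 \<and>
         e0 * e1 * e0 = d ^ 2 * e0 \<and> r1 * r0 * e1 * r0 * r1 * e0 = d * e0"
  using brG2_r0_r1_e0 brG2_e0_r1_r0 brG2_e0_e1_e0 brG2_r1_r0_e1_r0_r1_e0 assms by blast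

end
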